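(* Let $(X_1,x_1)$ and $(X_2,x_2)$ be pointed diffeological spaces. Then there is a natural isomorphism of vector spaces $T_{(x_1,x_2)}(X_1\times X_2)\cong T_{x_1}(X_1)\times T_{x_2}(X_2)$.
   Context: A diffeological space is a set $X$ together with, for every open subset $U$ of every $\mathbb{R}^n$, a set of functions $U\to X$ called plots, such that constant maps are plots, the composite of a plot with a smooth map between open subsets of Euclidean spaces is a plot, and a function which is locally a plot is a plot; smooth maps send plots to plots. $X_1\times X_2$ carries the product diffeology, whose plots are the maps whose components are plots. The internal tangent space $T_x(X)$ is the colimit in the category of real vector spaces of the functor on the category whose objects are plots $p:U\to X$ with $U$ a connected open neighbourhood of $0$ in some $\mathbb{R}^n$ and $p(0)=x$, and whose morphisms $p\to q$ (for $q:V\to X$) are smooth maps $f:U\to V$ with $f(0)=0$ and $q\circ f=p$, sending $p$ to $T_0(U)$ and $f$ to $f_*:T_0(U)\to T_0(V)$. Smooth pointed maps induce linear maps between internal tangent spaces. *)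

theory Defs
  imports "HOL-Analysis.Analysis"
begin

text \<open>R^n is modelled as the set of vectors v :: nat => real vanishing at indices >= n.
  The type nat => real carries the product topology, which on R^n is the Euclidean one.\<close>

type_synonym vec = "nat \<Rightarrow> real"

definition Rn :: "nat \<Rightarrow> vec set" where
  "Rn n = {v. \<forall>i\<ge>n. v i = 0}"

definition origin :: vec where
  "origin = (\<lambda>_. 0)"

definition open_Rn :: "nat \<Rightarrow> vec set \<Rightarrow> bool" where
  "open_Rn n U \<longleftrightarrow> openin (top_of_set (Rn n)) U"

definition pdiff :: "nat \<Rightarrow> (vec \<Rightarrow> real) \<Rightarrow> vec \<Rightarrow> real" where
  "pdiff i g x = deriv (\<lambda>t. g (x(i := x i + t))) 0"

fun dpart :: "nat list \<Rightarrow> (vec \<Rightarrow> real) \<Rightarrow> vec \<Rightarrow> real" where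
  "dpart [] g = g"
| "dpart (i # is) g = pdiff i (dpart is g)"

definition smooth_fun :: "nat \<Rightarrow> vec set \<Rightarrow> (vec \<Rightarrow> real) \<Rightarrow> bool" where
  "smooth_fun n U g \<longleftrightarrow>
     (\<forall>is. set is \<subseteq> {..<n} \<longrightarrow>
        continuous_on U (dpart is g) \<and>
        (\<forall>x\<in>U. \<forall>i<n. (\<lambda>t. dpart is g (x(i := x i + t))) differentiable (at 0)))"

definition smooth_map :: "nat \<Rightarrow> vec set \<Rightarrow> nat \<Rightarrow> (vec \<Rightarrow> vec) \<Rightarrow> bool" where
  "smooth_map n U m f \<longleftrightarrow> f ` U \<subseteq> Rn m \<and> (\<forall>j<m. smooth_fun n U (\<lambda>x. f x j))"

text \<open>A diffeology on a carrier set X is given by the predicate D n U p: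
  "p : U -> X is a plot, U open in R^n".  Plots are only relevant on their domain.\<close>

definition diffeology :: "'a set \<Rightarrow> (nat \<Rightarrow> vec set \<Rightarrow> (vec \<Rightarrow> 'a) \<Rightarrow> bool) \<Rightarrow> bool" where
  "diffeology X D \<longleftrightarrow>
     (\<forall>n U p. D n U p \<longrightarrow> open_Rn n U \<and> p ` U \<subseteq> X)
   \<and> (\<forall>n U p q. open_Rn n U \<and> (\<forall>u\<in>U. p u = q u) \<longrightarrow> (D n U p \<longleftrightarrow> D n U q))
   \<and> (\<forall>n U c. open_Rn n U \<and> c \<in> X \<longrightarrow> D n U (\<lambda>_. c))
   \<and> (\<forall>n V p m U f. D n V p \<and> open_Rn m U \<and> smooth_map m U n f \<and> f ` U \<subseteq> V
        \<longrightarrow> D m U (p \<circ> f))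
   \<and> (\<forall>n U p. open_Rn n U \<and> p ` U \<subseteq> X \<and>
        (\<forall>u\<in>U. \<exists>W. open_Rn n W \<and> u \<in> W \<and> W \<subseteq> U \<and> D n W p) \<longrightarrow> D n U p)"

definition dsmooth ::
  "'a set \<Rightarrow> (nat \<Rightarrow> vec set \<Rightarrow> (vec \<Rightarrow> 'a) \<Rightarrow> bool) \<Rightarrow>
   'b set \<Rightarrow> (nat \<Rightarrow> vec set \<Rightarrow> (vec \<Rightarrow> 'b) \<Rightarrow> bool) \<Rightarrow> ('a \<Rightarrow> 'b) \<Rightarrow> bool" where
  "dsmooth X D Y E g \<longleftrightarrow> g ` X \<subseteq> Y \<and> (\<forall>n U p. D n U p \<longrightarrow> E n U (g \<circ> p))"

definition prod_diffeology ::
  "(nat \<Rightarrow> vec set \<Rightarrow> (vec \<Rightarrow> 'a) \<Rightarrow> bool) \<Rightarrow> (nat \<Rightarrow> vec set \<Rightarrow> (vec \<Rightarrow> 'b) \<Rightarrow> bool) \<Rightarrow>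
   nat \<Rightarrow> vec set \<Rightarrow> (vec \<Rightarrow> 'a \<times> 'b) \<Rightarrow> bool" where
  "prod_diffeology D1 D2 n U p \<longleftrightarrow> open_Rn n U \<and> D1 n U (fst \<circ> p) \<and> D2 n U (snd \<circ> p)"

section \<open>The internal tangent space as a colimit of vector spaces\<close>

type_synonym 'a plotobj = "nat \<times> vec set \<times> (vec \<Rightarrow> 'a)"

text \<open>objects of the indexing category: plots p : U -> X, U connected open nbhd of 0, p(0) = x\<close>
definition pointed_plot :: "(nat \<Rightarrow> vec set \<Rightarrow> (vec \<Rightarrow> 'a) \<Rightarrow> bool) \<Rightarrow> 'a \<Rightarrow> 'a plotobj \<Rightarrow> bool" where
  "pointed_plot D x P \<longleftrightarrow> (case P of (n, U, p) \<Rightarrow>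
      D n U p \<and> connected U \<and> origin \<in> U \<and> p origin = x)"

definition plot_morphism :: "'a plotobj \<Rightarrow> 'a plotobj \<Rightarrow> (vec \<Rightarrow> vec) \<Rightarrow> bool" where
  "plot_morphism P Q f \<longleftrightarrow> (case P of (n, U, p) \<Rightarrow> case Q of (m, V, q) \<Rightarrow>
      smooth_map n U m f \<and> f ` U \<subseteq> V \<and> f origin = origin \<and> (\<forall>u\<in>U. q (f u) = p u))"

definition jac :: "nat \<Rightarrow> nat \<Rightarrow> (vec \<Rightarrow> vec) \<Rightarrow> vec \<Rightarrow> vec" where
  "jac n m f v = (\<lambda>j. if j < m then (\<Sum>i<n. pdiff i (\<lambda>y. f y j) origin * v i) else 0)"

text \<open>direct sum of the T_0(U_P) over all objects P\<close>
definition dsum :: "(nat \<Rightarrow> vec set \<Rightarrow> (vec \<Rightarrow> 'a) \<Rightarrow> bool) \<Rightarrow> 'a \<Rightarrow> ('a plotobj \<Rightarrow> vec) set" where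
  "dsum D x = {\<phi>. finite {P. \<phi> P \<noteq> origin} \<and> (\<forall>P. \<phi> P \<noteq> origin \<longrightarrow> pointed_plot D x P)
                  \<and> (\<forall>P. \<phi> P \<in> Rn (fst P))}"

definition sadd :: "('p \<Rightarrow> vec) \<Rightarrow> ('p \<Rightarrow> vec) \<Rightarrow> ('p \<Rightarrow> vec)" where
  "sadd \<phi> \<psi> = (\<lambda>P j. \<phi> P j + \<psi> P j)"

definition sscale :: "real \<Rightarrow> ('p \<Rightarrow> vec) \<Rightarrow> ('p \<Rightarrow> vec)" where
  "sscale c \<phi> = (\<lambda>P j. c * \<phi> P j)"

definition ins :: "'p \<Rightarrow> vec \<Rightarrow> ('p \<Rightarrow> vec)" where
  "ins P v = (\<lambda>Q. if Q = P then v else origin)"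

inductive_set rel :: "(nat \<Rightarrow> vec set \<Rightarrow> (vec \<Rightarrow> 'a) \<Rightarrow> bool) \<Rightarrow> 'a \<Rightarrow> ('a plotobj \<Rightarrow> vec) set"
  for D :: "nat \<Rightarrow> vec set \<Rightarrow> (vec \<Rightarrow> 'a) \<Rightarrow> bool" and x :: 'a where
  rel_zero: "(\<lambda>_. origin) \<in> rel D x"
| rel_step: "\<lbrakk> r \<in> rel D x; pointed_plot D x P; pointed_plot D x Q; plot_morphism P Q f;
              v \<in> Rn (fst P) \<rbrakk> \<Longrightarrow>
     sadd r (sscale c (sadd (ins P v) (sscale (-1) (ins Q (jac (fst P) (fst Q) f v))))) \<in> rel D x"

definition cls :: "(nat \<Rightarrow> vec set \<Rightarrow> (vec \<Rightarrow> 'a) \<Rightarrow> bool) \<Rightarrow> 'a \<Rightarrow> ('a plotobj \<Rightarrow> vec) \<Rightarrow> ('a plotobj \<Rightarrow> vec) set" where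
  "cls D x \<phi> = {\<psi> \<in> dsum D x. sadd \<phi> (sscale (-1) \<psi>) \<in> rel D x}"

definition tspace :: "(nat \<Rightarrow> vec set \<Rightarrow> (vec \<Rightarrow> 'a) \<Rightarrow> bool) \<Rightarrow> 'a \<Rightarrow> ('a plotobj \<Rightarrow> vec) set set" where
  "tspace D x = cls D x ` dsum D x"

definition tadd :: "(nat \<Rightarrow> vec set \<Rightarrow> (vec \<Rightarrow> 'a) \<Rightarrow> bool) \<Rightarrow> 'a \<Rightarrow>
    ('a plotobj \<Rightarrow> vec) set \<Rightarrow> ('a plotobj \<Rightarrow> vec) set \<Rightarrow> ('a plotobj \<Rightarrow> vec) set" where
  "tadd D x C1 C2 = cls D x (sadd (SOME \<phi>. \<phi> \<in> C1) (SOME \<psi>. \<psi> \<in> C2))"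

definition tscale :: "(nat \<Rightarrow> vec set \<Rightarrow> (vec \<Rightarrow> 'a) \<Rightarrow> bool) \<Rightarrow> 'a \<Rightarrow>
    real \<Rightarrow> ('a plotobj \<Rightarrow> vec) set \<Rightarrow> ('a plotobj \<Rightarrow> vec) set" where
  "tscale D x c C = cls D x (sscale c (SOME \<phi>. \<phi> \<in> C))"

definition push_obj :: "('a \<Rightarrow> 'b) \<Rightarrow> 'a plotobj \<Rightarrow> 'b plotobj" where
  "push_obj g P = (case P of (n, U, p) \<Rightarrow> (n, U, g \<circ> p))"

definition dpush :: "('a \<Rightarrow> 'b) \<Rightarrow> ('a plotobj \<Rightarrow> vec) \<Rightarrow> ('b plotobj \<Rightarrow> vec)" where
  "dpush g \<phi> = (\<lambda>Q j. \<Sum>P\<in>{P. \<phi> P \<noteq> origin \<and> push_obj g P = Q}. \<phi> P j)"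

definition tmap :: "(nat \<Rightarrow> vec set \<Rightarrow> (vec \<Rightarrow> 'b) \<Rightarrow> bool) \<Rightarrow> 'b \<Rightarrow> ('a \<Rightarrow> 'b) \<Rightarrow>
    ('a plotobj \<Rightarrow> vec) set \<Rightarrow> ('b plotobj \<Rightarrow> vec) set" where
  "tmap E y g C = cls E y (dpush g (SOME \<phi>. \<phi> \<in> C))"

definition prod_cmp ::
  "(nat \<Rightarrow> vec set \<Rightarrow> (vec \<Rightarrow> 'a) \<Rightarrow> bool) \<Rightarrow> 'a \<Rightarrow> (nat \<Rightarrow> vec set \<Rightarrow> (vec \<Rightarrow> 'b) \<Rightarrow> bool) \<Rightarrow> 'b \<Rightarrow>
   (('a \<times> 'b) plotobj \<Rightarrow> vec) set \<Rightarrow> (('a plotobj \<Rightarrow> vec) set \<times> ('b plotobj \<Rightarrow> vec) set)" where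
  "prod_cmp D1 x1 D2 x2 C = (tmap D1 x1 fst C, tmap D2 x2 snd C)"

end

theory Submission
  imports Defs
begin

text \<open>The inverse of \<open>(pr\<^sub>1\<^sub>*, pr\<^sub>2\<^sub>*)\<close> is \<open>(C\<^sub>1, C\<^sub>2) \<mapsto> \<iota>\<^sub>1\<^sub>* C\<^sub>1 + \<iota>\<^sub>2\<^sub>* C\<^sub>2\<close> with
  \<open>\<iota>\<^sub>1 a = (a, x\<^sub>2)\<close> and \<open>\<iota>\<^sub>2 b = (x\<^sub>1, b)\<close>. Since \<open>pr\<^sub>i \<circ> \<iota>\<^sub>j\<close> is the identity for \<open>i = j\<close>
  and constant otherwise, and constant plots contribute nothing to a tangent space,
  \<open>pr\<^sub>* \<circ> \<iota>\<^sub>*\<close> is the identity. For \<open>\<iota>\<^sub>* \<circ> pr\<^sub>*\<close> it suffices to split a generator: for a plot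
  \<open>p = (p\<^sub>1, p\<^sub>2)\<close> on \<open>U \<subseteq> \<real>\<^sup>n\<close>, the plot \<open>(u, w) \<mapsto> (p\<^sub>1 u, p\<^sub>2 w)\<close> on \<open>U \<times> U\<close> receives
  the diagonal from \<open>p\<close> and the two block inclusions from \<open>(p\<^sub>1, x\<^sub>2)\<close> and \<open>(x\<^sub>1, p\<^sub>2)\<close>; as
  the Jacobian of the diagonal is the sum of those of the inclusions,
  \<open>[p, v] = [(p\<^sub>1, x\<^sub>2), v] + [(x\<^sub>1, p\<^sub>2), v]\<close>.\<close>

subsection \<open>The direct sum and the subspace of relations\<close>

definition ssub :: "('p \<Rightarrow> vec) \<Rightarrow> ('p \<Rightarrow> vec) \<Rightarrow> ('p \<Rightarrow> vec)" where
  "ssub \<phi> \<psi> = sadd \<phi> (sscale (-1) \<psi>)"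

lemma sfun_eqI: "(\<And>P j. \<phi> P j = \<psi> P j) \<Longrightarrow> \<phi> = (\<psi> :: 'p \<Rightarrow> vec)"
  by (simp add: fun_eq_iff)

lemma origin_apply: "origin i = 0"
  by (simp add: origin_def)

lemma origin_in_Rn [simp]: "origin \<in> Rn n"
  by (simp add: Rn_def origin_apply)

lemma eq_origin_iff: "v = origin \<longleftrightarrow> (\<forall>j. v j = 0)"
  by (auto simp: origin_def)

lemma sadd_apply: "sadd \<phi> \<psi> P j = \<phi> P j + \<psi> P j"
  by (simp add: sadd_def)

lemma sscale_apply: "sscale c \<phi> P j = c * \<phi> P j"
  by (simp add: sscale_def)

lemma ssub_apply: "ssub \<phi> \<psi> P j = \<phi> P j - \<psi> P j"
  by (simp add: ssub_def sadd_apply sscale_apply)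

text \<open>Not declared \<open>[simp]\<close>: the simplifier would use them to eta-expand partially applied
  terms such as \<open>sadd r s\<close> or \<open>\<lambda>_. origin\<close>.\<close>

lemmas sfun_simps = origin_apply sadd_apply sscale_apply ssub_apply

lemma ins_apply: "ins P v Q = (if Q = P then v else origin)"
  by (simp add: ins_def)

lemma rel_sadd:
  assumes "r \<in> rel D x" "s \<in> rel D x"
  shows "sadd r s \<in> rel D x"
  using assms(2)
proof (induction s rule: rel.induct)
  case rel_zero
  have "sadd r (\<lambda>_. origin) = r" by (rule sfun_eqI) (simp add: sfun_simps)
  with assms(1) show ?case by simp
next
  case (rel_step s P Q f v c)
  have "sadd (sadd r s) (sscale c (sadd (ins P v) (sscale (- 1) (ins Q (jac (fst P) (fst Q) f v)))))
          \<in> rel D x"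
    using rel_step by (intro rel.rel_step) auto
  moreover have "sadd r (sadd s g) = sadd (sadd r s) g" for g :: "'a plotobj \<Rightarrow> vec"
    by (rule sfun_eqI) (simp add: sfun_simps)
  ultimately show ?case by simp
qed

lemma rel_sscale: "r \<in> rel D x \<Longrightarrow> sscale a r \<in> rel D x"
proof (induction r rule: rel.induct)
  case rel_zero
  have zero: "sscale a (\<lambda>_. origin) = (\<lambda>_. origin)" by (rule sfun_eqI) (simp add: sfun_simps)
  show ?case unfolding zero by (rule rel.rel_zero)
next
  case (rel_step s P Q f v c)
  have "sadd (sscale a s) (sscale (a * c)
          (sadd (ins P v) (sscale (- 1) (ins Q (jac (fst P) (fst Q) f v))))) \<in> rel D x"
    using rel_step by (intro rel.rel_step) auto
  moreover have "sscale a (sadd s (sscale c g)) = sadd (sscale a s) (sscale (a * c) g)"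
    for g :: "'a plotobj \<Rightarrow> vec"
    by (rule sfun_eqI) (simp add: sfun_simps algebra_simps)
  ultimately show ?case by simp
qed

lemma rel_ssub: "r \<in> rel D x \<Longrightarrow> s \<in> rel D x \<Longrightarrow> ssub r s \<in> rel D x"
  unfolding ssub_def by (intro rel_sadd rel_sscale)

lemma rel_generator:
  assumes "pointed_plot D x P" "pointed_plot D x Q" "plot_morphism P Q f" "v \<in> Rn (fst P)"
  shows "ssub (ins P v) (ins Q (jac (fst P) (fst Q) f v)) \<in> rel D x"
proof -
  have "sadd (\<lambda>_. origin) (sscale 1 g) = g" for g :: "'a plotobj \<Rightarrow> vec"
    by (rule sfun_eqI) (simp add: sfun_simps)
  then show ?thesis
    using rel_step[OF rel_zero assms, of 1] by (simp add: ssub_def)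
qed

lemma ins_in_dsum: "pointed_plot D x P \<Longrightarrow> v \<in> Rn (fst P) \<Longrightarrow> ins P v \<in> dsum D x"
  by (auto simp: dsum_def ins_apply intro: finite_subset[of _ "{P}"])

lemma zero_in_dsum: "(\<lambda>_. origin) \<in> dsum D x"
  by (simp add: dsum_def)

lemma sadd_in_dsum:
  assumes "\<phi> \<in> dsum D x" "\<psi> \<in> dsum D x"
  shows "sadd \<phi> \<psi> \<in> dsum D x"
proof -
  have supp: "{P. sadd \<phi> \<psi> P \<noteq> origin} \<subseteq> {P. \<phi> P \<noteq> origin} \<union> {P. \<psi> P \<noteq> origin}"
    by (auto simp: sfun_simps eq_origin_iff)
  with assms show ?thesis
    by (auto simp: sfun_simps dsum_def Rn_def intro: finite_subset[OF supp])
qed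

lemma sscale_in_dsum:
  assumes "\<phi> \<in> dsum D x"
  shows "sscale c \<phi> \<in> dsum D x"
proof -
  have supp: "{P. sscale c \<phi> P \<noteq> origin} \<subseteq> {P. \<phi> P \<noteq> origin}"
    by (auto simp: sfun_simps eq_origin_iff)
  with assms show ?thesis
    by (auto simp: sfun_simps dsum_def Rn_def intro: finite_subset[OF supp])
qed

lemma ssub_in_dsum: "\<phi> \<in> dsum D x \<Longrightarrow> \<psi> \<in> dsum D x \<Longrightarrow> ssub \<phi> \<psi> \<in> dsum D x"
  unfolding ssub_def by (intro sadd_in_dsum sscale_in_dsum)

lemma jac_in_Rn: "jac n m f v \<in> Rn m"
  by (simp add: jac_def Rn_def)

lemma rel_subset_dsum: "r \<in> rel D x \<Longrightarrow> r \<in> dsum D x"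
proof (induction r rule: rel.induct)
  case rel_zero
  show ?case by (rule zero_in_dsum)
next
  case rel_step
  then show ?case by (intro sadd_in_dsum sscale_in_dsum ins_in_dsum jac_in_Rn)
qed

lemma dsum_induct [consumes 1, case_names zero ins]:
  assumes "\<phi> \<in> dsum D x"
    and zero: "Pr (\<lambda>_. origin)"
    and ins: "\<And>\<psi> P v. \<psi> \<in> dsum D x \<Longrightarrow> Pr \<psi> \<Longrightarrow> pointed_plot D x P \<Longrightarrow> v \<in> Rn (fst P)
                \<Longrightarrow> Pr (sadd (ins P v) \<psi>)"
  shows "Pr \<phi>"
proof -
  have "Pr \<phi>" if "finite S" "\<phi> \<in> dsum D x" "{P. \<phi> P \<noteq> origin} \<subseteq> S" for S \<phi>
    using that
  proof (induction S arbitrary: \<phi> rule: finite_induct)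
    case empty
    have "\<phi> = (\<lambda>_. origin)" by (rule ext) (use empty.prems in blast)
    with zero show ?case by simp
  next
    case (insert P S)
    define \<psi> where "\<psi> = \<phi>(P := origin)"
    have \<psi>: "\<psi> \<in> dsum D x" "{Q. \<psi> Q \<noteq> origin} \<subseteq> S"
      using insert.prems by (auto simp: dsum_def \<psi>_def intro: finite_subset[of _ "{P. \<phi> P \<noteq> origin}"])
    have split: "\<phi> = sadd (ins P (\<phi> P)) \<psi>"
      by (rule sfun_eqI) (simp add: sfun_simps \<psi>_def ins_apply)
    show ?case
    proof (cases "\<phi> P = origin")
      case True
      with insert show ?thesis by blast
    next
      case False
      with insert.prems have "pointed_plot D x P" "\<phi> P \<in> Rn (fst P)"
        unfolding dsum_def by blast+
      with \<psi> insert.IH show ?thesis by (subst split) (rule ins)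
    qed
  qed
  with assms(1) show ?thesis by (auto simp: dsum_def)
qed

lemma cls_mem_iff: "\<psi> \<in> cls D x \<phi> \<longleftrightarrow> \<psi> \<in> dsum D x \<and> ssub \<phi> \<psi> \<in> rel D x"
  by (simp add: cls_def ssub_def)

lemma cls_self:
  assumes "\<phi> \<in> dsum D x"
  shows "\<phi> \<in> cls D x \<phi>"
proof -
  have "ssub \<phi> \<phi> = (\<lambda>_. origin)" by (rule sfun_eqI) (simp add: sfun_simps)
  with assms show ?thesis by (simp add: cls_mem_iff rel.rel_zero)
qed

lemma cls_eq_iff:
  assumes "\<phi> \<in> dsum D x" "\<psi> \<in> dsum D x"
  shows "cls D x \<phi> = cls D x \<psi> \<longleftrightarrow> ssub \<phi> \<psi> \<in> rel D x"
proof
  assume "cls D x \<phi> = cls D x \<psi>"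
  then have "\<psi> \<in> cls D x \<phi>" using cls_self[OF assms(2)] by simp
  then show "ssub \<phi> \<psi> \<in> rel D x" by (simp add: cls_mem_iff)
next
  assume r: "ssub \<phi> \<psi> \<in> rel D x"
  show "cls D x \<phi> = cls D x \<psi>"
  proof (intro set_eqI iffI)
    fix \<xi> assume "\<xi> \<in> cls D x \<phi>"
    then have \<xi>: "\<xi> \<in> dsum D x" "ssub \<phi> \<xi> \<in> rel D x" by (simp_all add: cls_mem_iff)
    have "ssub \<psi> \<xi> = ssub (ssub \<phi> \<xi>) (ssub \<phi> \<psi>)" by (rule sfun_eqI) (simp add: sfun_simps)
    with rel_ssub[OF \<xi>(2) r] \<xi>(1) show "\<xi> \<in> cls D x \<psi>" by (simp add: cls_mem_iff)
  next
    fix \<xi> assume "\<xi> \<in> cls D x \<psi>"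
    then have \<xi>: "\<xi> \<in> dsum D x" "ssub \<psi> \<xi> \<in> rel D x" by (simp_all add: cls_mem_iff)
    have "ssub \<phi> \<xi> = sadd (ssub \<psi> \<xi>) (ssub \<phi> \<psi>)" by (rule sfun_eqI) (simp add: sfun_simps)
    with rel_sadd[OF \<xi>(2) r] \<xi>(1) show "\<xi> \<in> cls D x \<phi>" by (simp add: cls_mem_iff)
  qed
qed

lemma cls_representative:
  assumes "\<phi> \<in> dsum D x"
  shows "(SOME \<xi>. \<xi> \<in> cls D x \<phi>) \<in> dsum D x" "ssub (SOME \<xi>. \<xi> \<in> cls D x \<phi>) \<phi> \<in> rel D x"
proof -
  have "(SOME \<xi>. \<xi> \<in> cls D x \<phi>) \<in> cls D x \<phi>"
    using cls_self[OF assms] by (rule someI[of "\<lambda>\<xi>. \<xi> \<in> cls D x \<phi>"])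
  then have "(SOME \<xi>. \<xi> \<in> cls D x \<phi>) \<in> dsum D x" "ssub \<phi> (SOME \<xi>. \<xi> \<in> cls D x \<phi>) \<in> rel D x"
    by (simp_all add: cls_mem_iff)
  moreover have "ssub (SOME \<xi>. \<xi> \<in> cls D x \<phi>) \<phi> = sscale (-1) (ssub \<phi> (SOME \<xi>. \<xi> \<in> cls D x \<phi>))"
    by (rule sfun_eqI) (simp add: sfun_simps)
  ultimately show "(SOME \<xi>. \<xi> \<in> cls D x \<phi>) \<in> dsum D x" "ssub (SOME \<xi>. \<xi> \<in> cls D x \<phi>) \<phi> \<in> rel D x"
    by (simp_all add: rel_sscale)
qed

lemma tspaceE:
  assumes "C \<in> tspace D x"
  obtains \<phi> where "\<phi> \<in> dsum D x" "C = cls D x \<phi>"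
  using assms by (auto simp: tspace_def)

lemma tadd_cls:
  assumes "\<phi> \<in> dsum D x" "\<psi> \<in> dsum D x"
  shows "tadd D x (cls D x \<phi>) (cls D x \<psi>) = cls D x (sadd \<phi> \<psi>)"
proof -
  define \<phi>' where "\<phi>' = (SOME \<xi>. \<xi> \<in> cls D x \<phi>)"
  define \<psi>' where "\<psi>' = (SOME \<xi>. \<xi> \<in> cls D x \<psi>)"
  note \<phi>' = cls_representative[OF assms(1), folded \<phi>'_def]
  note \<psi>' = cls_representative[OF assms(2), folded \<psi>'_def]
  have "ssub (sadd \<phi>' \<psi>') (sadd \<phi> \<psi>) = sadd (ssub \<phi>' \<phi>) (ssub \<psi>' \<psi>)"
    by (rule sfun_eqI) (simp add: sfun_simps)
  then have "ssub (sadd \<phi>' \<psi>') (sadd \<phi> \<psi>) \<in> rel D x"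
    using \<phi>'(2) \<psi>'(2) by (simp add: rel_sadd)
  then show ?thesis
    using assms \<phi>'(1) \<psi>'(1) by (simp add: tadd_def \<phi>'_def \<psi>'_def cls_eq_iff sadd_in_dsum)
qed

lemma tscale_cls:
  assumes "\<phi> \<in> dsum D x"
  shows "tscale D x c (cls D x \<phi>) = cls D x (sscale c \<phi>)"
proof -
  define \<phi>' where "\<phi>' = (SOME \<xi>. \<xi> \<in> cls D x \<phi>)"
  note \<phi>' = cls_representative[OF assms, folded \<phi>'_def]
  have "ssub (sscale c \<phi>') (sscale c \<phi>) = sscale c (ssub \<phi>' \<phi>)"
    by (rule sfun_eqI) (simp add: sfun_simps algebra_simps)
  then have "ssub (sscale c \<phi>') (sscale c \<phi>) \<in> rel D x"
    using \<phi>'(2) by (simp add: rel_sscale)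
  then show ?thesis
    using assms \<phi>'(1) by (simp add: tscale_def \<phi>'_def cls_eq_iff sscale_in_dsum)
qed

subsection \<open>Pushforward along a map of the underlying sets\<close>

definition finsupp :: "('p \<Rightarrow> vec) \<Rightarrow> bool" where
  "finsupp \<phi> \<longleftrightarrow> finite {P. \<phi> P \<noteq> origin}"

lemma dsum_finsupp: "\<phi> \<in> dsum D x \<Longrightarrow> finsupp \<phi>"
  by (simp add: dsum_def finsupp_def)

lemma finsupp_sadd: "finsupp \<phi> \<Longrightarrow> finsupp \<psi> \<Longrightarrow> finsupp (sadd \<phi> \<psi>)"
  unfolding finsupp_def
  by (rule finite_subset[of _ "{P. \<phi> P \<noteq> origin} \<union> {P. \<psi> P \<noteq> origin}"]) (auto simp: sfun_simps eq_origin_iff)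

lemma finsupp_sscale: "finsupp \<phi> \<Longrightarrow> finsupp (sscale c \<phi>)"
  unfolding finsupp_def
  by (rule finite_subset[of _ "{P. \<phi> P \<noteq> origin}"]) (auto simp: sfun_simps eq_origin_iff)

lemma finsupp_ins: "finsupp (ins P v)"
  unfolding finsupp_def by (rule finite_subset[of _ "{P}"]) (auto simp: ins_apply)

lemma fst_push_obj [simp]: "fst (push_obj g P) = fst P"
  by (cases P) (simp add: push_obj_def)

lemma push_obj_comp: "push_obj g (push_obj h P) = push_obj (g \<circ> h) P"
  by (cases P) (simp add: push_obj_def comp_assoc)

lemma push_obj_id: "push_obj (\<lambda>a. a) P = P"
  by (cases P) (simp add: push_obj_def comp_def)

lemma dpush_eq_sum:
  assumes "finite S" "{P. \<phi> P \<noteq> origin} \<subseteq> S"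
  shows "dpush g \<phi> Q j = (\<Sum>P\<in>{P\<in>S. push_obj g P = Q}. \<phi> P j)"
  unfolding dpush_def
  by (rule sum.mono_neutral_left) (use assms in \<open>auto simp: sfun_simps eq_origin_iff\<close>)

lemma dpush_zero: "dpush g (\<lambda>_. origin) = (\<lambda>_. origin)"
  by (rule sfun_eqI) (simp add: sfun_simps dpush_def)

lemma dpush_sadd:
  assumes "finsupp \<phi>" "finsupp \<psi>"
  shows "dpush g (sadd \<phi> \<psi>) = sadd (dpush g \<phi>) (dpush g \<psi>)"
proof (rule sfun_eqI)
  fix Q j
  let ?S = "{P. \<phi> P \<noteq> origin} \<union> {P. \<psi> P \<noteq> origin}"
  have S: "finite ?S" using assms by (simp add: finsupp_def)
  have "dpush g (sadd \<phi> \<psi>) Q j = (\<Sum>P\<in>{P\<in>?S. push_obj g P = Q}. sadd \<phi> \<psi> P j)"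
    by (rule dpush_eq_sum[OF S]) (auto simp: sfun_simps eq_origin_iff)
  also have "\<dots> = dpush g \<phi> Q j + dpush g \<psi> Q j"
    by (simp add: sfun_simps sum.distrib dpush_eq_sum[OF S])
  finally show "dpush g (sadd \<phi> \<psi>) Q j = sadd (dpush g \<phi>) (dpush g \<psi>) Q j" by (simp add: sfun_simps)
qed

lemma dpush_sscale:
  assumes "finsupp \<phi>"
  shows "dpush g (sscale c \<phi>) = sscale c (dpush g \<phi>)"
proof (rule sfun_eqI)
  fix Q j
  let ?S = "{P. \<phi> P \<noteq> origin}"
  have S: "finite ?S" using assms by (simp add: finsupp_def)
  have "dpush g (sscale c \<phi>) Q j = (\<Sum>P\<in>{P\<in>?S. push_obj g P = Q}. sscale c \<phi> P j)"
    by (rule dpush_eq_sum[OF S]) (auto simp: sfun_simps eq_origin_iff)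
  also have "\<dots> = c * dpush g \<phi> Q j"
    by (simp add: sfun_simps sum_distrib_left dpush_eq_sum[OF S])
  finally show "dpush g (sscale c \<phi>) Q j = sscale c (dpush g \<phi>) Q j" by (simp add: sfun_simps)
qed

lemma dpush_ssub: "finsupp \<phi> \<Longrightarrow> finsupp \<psi> \<Longrightarrow> dpush g (ssub \<phi> \<psi>) = ssub (dpush g \<phi>) (dpush g \<psi>)"
  unfolding ssub_def by (simp add: dpush_sadd dpush_sscale finsupp_sscale)

lemma dpush_ins: "dpush g (ins P v) = ins (push_obj g P) v"
proof (rule sfun_eqI)
  fix Q j
  have "dpush g (ins P v) Q j = (\<Sum>P'\<in>{P'\<in>{P}. push_obj g P' = Q}. ins P v P' j)"
    by (rule dpush_eq_sum) (auto simp: ins_apply)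
  moreover have "{P'\<in>{P}. push_obj g P' = Q} = (if push_obj g P = Q then {P} else {})"
    by auto
  ultimately show "dpush g (ins P v) Q j = ins (push_obj g P) v Q j"
    by (simp add: ins_apply origin_apply)
qed

lemma dpush_support:
  assumes "finsupp \<phi>"
  shows "{Q. dpush g \<phi> Q \<noteq> origin} \<subseteq> push_obj g ` {P. \<phi> P \<noteq> origin}"
proof
  fix Q assume "Q \<in> {Q. dpush g \<phi> Q \<noteq> origin}"
  then obtain j where j: "dpush g \<phi> Q j \<noteq> 0" by (auto simp: sfun_simps eq_origin_iff)
  have S: "finite {P. \<phi> P \<noteq> origin}" using assms by (simp add: finsupp_def)
  show "Q \<in> push_obj g ` {P. \<phi> P \<noteq> origin}"
  proof (rule ccontr)
    assume "Q \<notin> push_obj g ` {P. \<phi> P \<noteq> origin}"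
    then have none: "{P \<in> {P. \<phi> P \<noteq> origin}. push_obj g P = Q} = {}" by auto
    have "dpush g \<phi> Q j = 0" unfolding dpush_eq_sum[OF S order_refl] none by simp
    with j show False by simp
  qed
qed

lemma finsupp_dpush:
  assumes "finsupp \<phi>"
  shows "finsupp (dpush g \<phi>)"
  using finite_subset[OF dpush_support[OF assms]] assms by (simp add: finsupp_def)

lemma dpush_comp:
  assumes "finsupp \<phi>"
  shows "dpush g (dpush h \<phi>) = dpush (g \<circ> h) \<phi>"
proof (rule sfun_eqI)
  fix Q j
  let ?S = "{P. \<phi> P \<noteq> origin}"
  let ?T = "push_obj h ` ?S"
  have S: "finite ?S" and T: "finite ?T" using assms by (simp_all add: finsupp_def)
  have "dpush g (dpush h \<phi>) Q j = (\<Sum>R\<in>{R\<in>?T. push_obj g R = Q}. dpush h \<phi> R j)"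
    by (rule dpush_eq_sum[OF T dpush_support[OF assms]])
  also have "\<dots> = (\<Sum>R\<in>{R\<in>?T. push_obj g R = Q}. \<Sum>P\<in>{P\<in>?S. push_obj h P = R}. \<phi> P j)"
    by (simp only: dpush_eq_sum[OF S order_refl])
  also have "\<dots> = (\<Sum>R\<in>{R\<in>?T. push_obj g R = Q}.
                    \<Sum>P\<in>{P\<in>{P\<in>?S. push_obj (g \<circ> h) P = Q}. push_obj h P = R}. \<phi> P j)"
  proof (rule sum.cong[OF refl])
    fix R assume "R \<in> {R\<in>?T. push_obj g R = Q}"
    then have "{P\<in>?S. push_obj h P = R} = {P\<in>{P\<in>?S. push_obj (g \<circ> h) P = Q}. push_obj h P = R}"
      by (auto simp: push_obj_comp[symmetric])
    then show "(\<Sum>P\<in>{P\<in>?S. push_obj h P = R}. \<phi> P j)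
        = (\<Sum>P\<in>{P\<in>{P\<in>?S. push_obj (g \<circ> h) P = Q}. push_obj h P = R}. \<phi> P j)"
      by simp
  qed
  also have "\<dots> = (\<Sum>P\<in>{P\<in>?S. push_obj (g \<circ> h) P = Q}. \<phi> P j)"
    by (rule sum.group) (use S in \<open>auto simp: push_obj_comp[symmetric]\<close>)
  also have "\<dots> = dpush (g \<circ> h) \<phi> Q j" by (simp add: dpush_eq_sum[OF S])
  finally show "dpush g (dpush h \<phi>) Q j = dpush (g \<circ> h) \<phi> Q j" .
qed

lemma dpush_id:
  assumes "finsupp \<phi>"
  shows "dpush (\<lambda>a. a) \<phi> = \<phi>"
proof (rule sfun_eqI)
  fix Q j
  let ?S = "{P. \<phi> P \<noteq> origin}"
  have S: "finite ?S" using assms by (simp add: finsupp_def)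
  show "dpush (\<lambda>a. a) \<phi> Q j = \<phi> Q j"
  proof (cases "\<phi> Q = origin")
    case True
    then have none: "{P\<in>?S. push_obj (\<lambda>a. a) P = Q} = {}" by (auto simp: push_obj_id)
    from True show ?thesis unfolding dpush_eq_sum[OF S order_refl] none by (simp add: origin_apply)
  next
    case False
    then have single: "{P\<in>?S. push_obj (\<lambda>a. a) P = Q} = {Q}" by (auto simp: push_obj_id)
    show ?thesis unfolding dpush_eq_sum[OF S order_refl] single by simp
  qed
qed

lemma pointed_plot_push:
  assumes "\<And>n U p. D n U p \<Longrightarrow> E n U (g \<circ> p)" "g x = y" "pointed_plot D x P"
  shows "pointed_plot E y (push_obj g P)"
  using assms by (cases P) (auto simp: pointed_plot_def push_obj_def)

lemma plot_morphism_push: "plot_morphism P Q f \<Longrightarrow> plot_morphism (push_obj g P) (push_obj g Q) f"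
  by (cases P; cases Q) (auto simp: plot_morphism_def push_obj_def)

text \<open>A map sending plots to plots sends the generators of \<open>rel\<close> to generators, with the
  same plot morphisms and hence the same Jacobians; this is all that is needed of smoothness.\<close>

context
  fixes D :: "nat \<Rightarrow> vec set \<Rightarrow> (vec \<Rightarrow> 'a) \<Rightarrow> bool" and x :: 'a
    and E :: "nat \<Rightarrow> vec set \<Rightarrow> (vec \<Rightarrow> 'b) \<Rightarrow> bool" and y :: 'b and g :: "'a \<Rightarrow> 'b"
  assumes plots: "\<And>n U p. D n U p \<Longrightarrow> E n U (g \<circ> p)" and base: "g x = y"
begin

lemma pointed_plot_pushed: "pointed_plot D x P \<Longrightarrow> pointed_plot E y (push_obj g P)"
  by (rule pointed_plot_push[of D E g, OF plots base])

lemma dpush_in_dsum: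
  assumes "\<phi> \<in> dsum D x"
  shows "dpush g \<phi> \<in> dsum E y"
proof -
  let ?S = "{P. \<phi> P \<noteq> origin}"
  have fin: "finsupp \<phi>" and S: "finite ?S" using assms by (simp_all add: dsum_def finsupp_def)
  have "dpush g \<phi> Q \<in> Rn (fst Q)" for Q
  proof -
    have "\<phi> P j = 0" if "push_obj g P = Q" "j \<ge> fst Q" for P j
    proof -
      have "\<phi> P \<in> Rn (fst P)" using assms unfolding dsum_def by blast
      with that show ?thesis by (auto simp: Rn_def)
    qed
    then show ?thesis by (simp add: Rn_def dpush_eq_sum[OF S])
  qed
  moreover have "pointed_plot E y Q" if Q: "dpush g \<phi> Q \<noteq> origin" for Q
  proof -
    obtain P where P: "\<phi> P \<noteq> origin" "Q = push_obj g P"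
      using dpush_support[OF fin, of g] Q by blast
    have "pointed_plot D x P" using assms P(1) unfolding dsum_def by blast
    then show ?thesis unfolding P(2) by (rule pointed_plot_pushed)
  qed
  moreover have "finite {Q. dpush g \<phi> Q \<noteq> origin}"
    using finsupp_dpush[OF fin] by (simp add: finsupp_def)
  ultimately show ?thesis unfolding dsum_def by blast
qed

lemma dpush_in_rel: "r \<in> rel D x \<Longrightarrow> dpush g r \<in> rel E y"
proof (induction r rule: rel.induct)
  case rel_zero
  show ?case unfolding dpush_zero by (rule rel.rel_zero)
next
  case (rel_step r P Q f v c)
  have "finsupp r" using rel_step.hyps(1) by (intro dsum_finsupp rel_subset_dsum)
  then have "dpush g (sadd r (sscale c (sadd (ins P v) (sscale (- 1) (ins Q (jac (fst P) (fst Q) f v))))))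
     = sadd (dpush g r) (sscale c (sadd (ins (push_obj g P) v)
         (sscale (- 1) (ins (push_obj g Q) (jac (fst (push_obj g P)) (fst (push_obj g Q)) f v)))))"
    by (simp add: dpush_sadd dpush_sscale dpush_ins finsupp_sadd finsupp_sscale finsupp_ins)
  also have "\<dots> \<in> rel E y"
    using rel_step.hyps(5)
    by (intro rel.rel_step[OF rel_step.IH pointed_plot_pushed pointed_plot_pushed plot_morphism_push]
        rel_step.hyps(2-4)) simp
  finally show ?case .
qed

lemma tmap_cls:
  assumes "\<phi> \<in> dsum D x"
  shows "tmap E y g (cls D x \<phi>) = cls E y (dpush g \<phi>)"
proof -
  define \<phi>' where "\<phi>' = (SOME \<xi>. \<xi> \<in> cls D x \<phi>)"
  note \<phi>' = cls_representative[OF assms, folded \<phi>'_def]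
  have "ssub (dpush g \<phi>') (dpush g \<phi>) \<in> rel E y"
    using dpush_in_rel[OF \<phi>'(2)] \<phi>'(1) assms by (simp add: dpush_ssub dsum_finsupp)
  then show ?thesis
    using assms \<phi>'(1) by (simp add: tmap_def \<phi>'_def cls_eq_iff dpush_in_dsum)
qed

end

lemma diffeology_plot_open: "diffeology X D \<Longrightarrow> D n U p \<Longrightarrow> open_Rn n U"
  unfolding diffeology_def by blast

lemma diffeology_const_plot: "diffeology X D \<Longrightarrow> open_Rn n U \<Longrightarrow> c \<in> X \<Longrightarrow> D n U (\<lambda>_. c)"
  unfolding diffeology_def by blast

lemma diffeology_comp_plot:
  "diffeology X D \<Longrightarrow> D n V p \<Longrightarrow> open_Rn m U \<Longrightarrow> smooth_map m U n f \<Longrightarrow> f ` U \<subseteq> V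
    \<Longrightarrow> D m U (p \<circ> f)"
  unfolding diffeology_def by blast

lemma open_Rn_subset: "open_Rn n U \<Longrightarrow> U \<subseteq> Rn n"
  unfolding open_Rn_def by (rule openin_imp_subset)

lemma prod_plot_iff:
  "prod_diffeology D1 D2 n U p \<longleftrightarrow> open_Rn n U \<and> D1 n U (fst \<circ> p) \<and> D2 n U (snd \<circ> p)"
  by (simp add: prod_diffeology_def)

lemma prod_plot_fst: "prod_diffeology D1 D2 n U p \<Longrightarrow> D1 n U (fst \<circ> p)"
  by (simp add: prod_diffeology_def)

lemma prod_plot_snd: "prod_diffeology D1 D2 n U p \<Longrightarrow> D2 n U (snd \<circ> p)"
  by (simp add: prod_diffeology_def)

lemma const_comp_plot:
  "diffeology X D \<Longrightarrow> diffeology Y E \<Longrightarrow> y \<in> Y \<Longrightarrow> D n U p \<Longrightarrow> E n U ((\<lambda>_. y) \<circ> p)"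
  by (simp add: comp_def diffeology_const_plot diffeology_plot_open)

lemma prod_plot_Pair_left:
  assumes "diffeology X1 D1" "diffeology X2 D2" "x2 \<in> X2" "D1 n U p"
  shows "prod_diffeology D1 D2 n U ((\<lambda>a. (a, x2)) \<circ> p)"
proof -
  have U: "open_Rn n U" using assms(1,4) by (rule diffeology_plot_open)
  have "D2 n U (\<lambda>_. x2)" by (rule diffeology_const_plot[OF assms(2) U assms(3)])
  with assms(4) U show ?thesis by (simp add: prod_plot_iff comp_def)
qed

lemma prod_plot_Pair_right:
  assumes "diffeology X1 D1" "diffeology X2 D2" "x1 \<in> X1" "D2 n U p"
  shows "prod_diffeology D1 D2 n U ((\<lambda>b. (x1, b)) \<circ> p)"
proof -
  have U: "open_Rn n U" using assms(2,4) by (rule diffeology_plot_open)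
  have "D1 n U (\<lambda>_. x1)" by (rule diffeology_const_plot[OF assms(1) U assms(3)])
  with assms(4) U show ?thesis by (simp add: prod_plot_iff comp_def)
qed

lemma prod_plot_map_prod:
  assumes "dsmooth X1 D1 Y1 E1 f1" "dsmooth X2 D2 Y2 E2 f2" "prod_diffeology D1 D2 n U p"
  shows "prod_diffeology E1 E2 n U (map_prod f1 f2 \<circ> p)"
proof -
  have "fst \<circ> (map_prod f1 f2 \<circ> p) = f1 \<circ> (fst \<circ> p)" "snd \<circ> (map_prod f1 f2 \<circ> p) = f2 \<circ> (snd \<circ> p)"
    by (auto simp: fun_eq_iff)
  with assms show ?thesis by (simp add: prod_plot_iff dsmooth_def)
qed

lemma Rn_0: "Rn 0 = {origin}"
  by (auto simp: Rn_def origin_def)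

text \<open>A constant plot factors through the point \<open>\<real>\<^sup>0\<close>, whose tangent space is zero.\<close>

lemma ins_const_plot_in_rel:
  assumes "diffeology X D" "y \<in> X" "pointed_plot D y P" "snd (snd P) = (\<lambda>_. y)" "v \<in> Rn (fst P)"
  shows "ins P v \<in> rel D y"
proof -
  let ?pt = "(0::nat, {origin}, \<lambda>_::vec. y)"
  have "open_Rn 0 {origin}"
    by (simp add: open_Rn_def Rn_0)
  then have pt: "pointed_plot D y ?pt"
    using diffeology_const_plot[OF assms(1) _ assms(2)] by (simp add: pointed_plot_def)
  have "plot_morphism P ?pt (\<lambda>_. origin)"
    using assms(3,4) by (cases P) (auto simp: plot_morphism_def smooth_map_def Rn_0 pointed_plot_def)
  from rel_generator[OF assms(3) pt this assms(5)]
  have "ssub (ins P v) (ins ?pt (jac (fst P) 0 (\<lambda>_. origin) v)) \<in> rel D y" by simp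
  moreover have "ssub (ins P v) (ins ?pt (jac (fst P) 0 (\<lambda>_. origin) v)) = ins P v"
    by (rule sfun_eqI) (simp add: sfun_simps jac_def ins_apply)
  ultimately show ?thesis by simp
qed

lemma dpush_const_in_rel:
  assumes "diffeology X D" "diffeology Y E" "y \<in> Y" "\<phi> \<in> dsum D x"
  shows "dpush (\<lambda>_. y) \<phi> \<in> rel E y"
  using assms(4)
proof (induction rule: dsum_induct)
  case zero
  show ?case unfolding dpush_zero by (rule rel.rel_zero)
next
  case (ins \<psi> P v)
  have "pointed_plot E y (push_obj (\<lambda>_. y) P)"
    by (rule pointed_plot_push[of D E "\<lambda>_. y" x]) (use const_comp_plot[OF assms(1-3)] ins.hyps(2) in auto)
  moreover have "snd (snd (push_obj (\<lambda>_. y) P)) = (\<lambda>_. y)"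
    by (cases P) (auto simp: push_obj_def)
  ultimately have "ins (push_obj (\<lambda>_. y) P) v \<in> rel E y"
    using ins_const_plot_in_rel[OF assms(2,3)] ins.hyps(3) by simp
  then show ?case
    using ins.IH ins.hyps(1)
    by (simp add: dpush_sadd dpush_ins finsupp_ins dsum_finsupp rel_sadd)
qed

lemma dpush_fst_in_dsum: "\<phi> \<in> dsum (prod_diffeology D1 D2) (x1, x2) \<Longrightarrow> dpush fst \<phi> \<in> dsum D1 x1"
  by (rule dpush_in_dsum[where D = "prod_diffeology D1 D2" and E = D1 and g = fst and x = "(x1, x2)"])
    (simp_all add: prod_plot_fst)

lemma dpush_snd_in_dsum: "\<phi> \<in> dsum (prod_diffeology D1 D2) (x1, x2) \<Longrightarrow> dpush snd \<phi> \<in> dsum D2 x2"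
  by (rule dpush_in_dsum[where D = "prod_diffeology D1 D2" and E = D2 and g = snd and x = "(x1, x2)"])
    (simp_all add: prod_plot_snd)

lemma prod_cmp_cls:
  assumes "\<phi> \<in> dsum (prod_diffeology D1 D2) (x1, x2)"
  shows "prod_cmp D1 x1 D2 x2 (cls (prod_diffeology D1 D2) (x1, x2) \<phi>)
           = (cls D1 x1 (dpush fst \<phi>), cls D2 x2 (dpush snd \<phi>))"
proof -
  have "tmap D1 x1 fst (cls (prod_diffeology D1 D2) (x1, x2) \<phi>) = cls D1 x1 (dpush fst \<phi>)"
    by (rule tmap_cls[where D = "prod_diffeology D1 D2" and E = D1 and g = fst and x = "(x1, x2)"])
      (simp_all add: prod_plot_fst assms)
  moreover have "tmap D2 x2 snd (cls (prod_diffeology D1 D2) (x1, x2) \<phi>) = cls D2 x2 (dpush snd \<phi>)"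
    by (rule tmap_cls[where D = "prod_diffeology D1 D2" and E = D2 and g = snd and x = "(x1, x2)"])
      (simp_all add: prod_plot_snd assms)
  ultimately show ?thesis by (simp add: prod_cmp_def)
qed

lemma prod_cmp_tadd:
  assumes "C \<in> tspace (prod_diffeology D1 D2) (x1, x2)" "C' \<in> tspace (prod_diffeology D1 D2) (x1, x2)"
  shows "prod_cmp D1 x1 D2 x2 (tadd (prod_diffeology D1 D2) (x1, x2) C C')
    = (tadd D1 x1 (fst (prod_cmp D1 x1 D2 x2 C)) (fst (prod_cmp D1 x1 D2 x2 C')),
       tadd D2 x2 (snd (prod_cmp D1 x1 D2 x2 C)) (snd (prod_cmp D1 x1 D2 x2 C')))"
proof -
  obtain \<phi> where \<phi>: "\<phi> \<in> dsum (prod_diffeology D1 D2) (x1, x2)" "C = cls (prod_diffeology D1 D2) (x1, x2) \<phi>"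
    using assms(1) by (rule tspaceE)
  obtain \<phi>' where \<phi>': "\<phi>' \<in> dsum (prod_diffeology D1 D2) (x1, x2)" "C' = cls (prod_diffeology D1 D2) (x1, x2) \<phi>'"
    using assms(2) by (rule tspaceE)
  show ?thesis
    using \<phi> \<phi>' dpush_fst_in_dsum[OF \<phi>(1)] dpush_fst_in_dsum[OF \<phi>'(1)]
      dpush_snd_in_dsum[OF \<phi>(1)] dpush_snd_in_dsum[OF \<phi>'(1)]
    by (simp add: tadd_cls prod_cmp_cls sadd_in_dsum dpush_sadd dsum_finsupp)
qed

lemma prod_cmp_tscale:
  assumes "C \<in> tspace (prod_diffeology D1 D2) (x1, x2)"
  shows "prod_cmp D1 x1 D2 x2 (tscale (prod_diffeology D1 D2) (x1, x2) c C)
    = (tscale D1 x1 c (fst (prod_cmp D1 x1 D2 x2 C)), tscale D2 x2 c (snd (prod_cmp D1 x1 D2 x2 C)))"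
proof -
  obtain \<phi> where \<phi>: "\<phi> \<in> dsum (prod_diffeology D1 D2) (x1, x2)" "C = cls (prod_diffeology D1 D2) (x1, x2) \<phi>"
    using assms by (rule tspaceE)
  show ?thesis
    using \<phi> dpush_fst_in_dsum[OF \<phi>(1)] dpush_snd_in_dsum[OF \<phi>(1)]
    by (simp add: tscale_cls prod_cmp_cls sscale_in_dsum dpush_sscale dsum_finsupp)
qed

lemma prod_cmp_natural:
  assumes f1: "dsmooth X1 D1 Y1 E1 f1" and f2: "dsmooth X2 D2 Y2 E2 f2"
    and C: "C \<in> tspace (prod_diffeology D1 D2) (x1, x2)"
  shows "prod_cmp E1 (f1 x1) E2 (f2 x2)
           (tmap (prod_diffeology E1 E2) (f1 x1, f2 x2) (map_prod f1 f2) C)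
    = (tmap E1 (f1 x1) f1 (fst (prod_cmp D1 x1 D2 x2 C)), tmap E2 (f2 x2) f2 (snd (prod_cmp D1 x1 D2 x2 C)))"
proof -
  obtain \<phi> where \<phi>: "\<phi> \<in> dsum (prod_diffeology D1 D2) (x1, x2)" "C = cls (prod_diffeology D1 D2) (x1, x2) \<phi>"
    using C by (rule tspaceE)
  have plots: "\<And>n U p. D1 n U p \<Longrightarrow> E1 n U (f1 \<circ> p)" "\<And>n U p. D2 n U p \<Longrightarrow> E2 n U (f2 \<circ> p)"
    using f1 f2 by (auto simp: dsmooth_def)
  have prod_plots: "\<And>n U p. prod_diffeology D1 D2 n U p \<Longrightarrow> prod_diffeology E1 E2 n U (map_prod f1 f2 \<circ> p)"
    by (rule prod_plot_map_prod[OF f1 f2])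
  have fin: "finsupp \<phi>" using \<phi>(1) by (rule dsum_finsupp)
  have "tmap (prod_diffeology E1 E2) (f1 x1, f2 x2) (map_prod f1 f2) C
      = cls (prod_diffeology E1 E2) (f1 x1, f2 x2) (dpush (map_prod f1 f2) \<phi>)"
    unfolding \<phi>(2)
    by (rule tmap_cls[where D = "prod_diffeology D1 D2" and E = "prod_diffeology E1 E2"
          and g = "map_prod f1 f2" and x = "(x1, x2)", OF prod_plots]) (simp_all add: \<phi>(1))
  moreover have "dpush (map_prod f1 f2) \<phi> \<in> dsum (prod_diffeology E1 E2) (f1 x1, f2 x2)"
    by (rule dpush_in_dsum[where D = "prod_diffeology D1 D2" and E = "prod_diffeology E1 E2"
          and g = "map_prod f1 f2" and x = "(x1, x2)", OF prod_plots]) (simp_all add: \<phi>(1))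
  moreover have "tmap E1 (f1 x1) f1 (cls D1 x1 (dpush fst \<phi>)) = cls E1 (f1 x1) (dpush f1 (dpush fst \<phi>))"
    by (rule tmap_cls[where D = D1 and E = E1 and g = f1 and x = x1, OF plots(1)])
      (simp_all add: dpush_fst_in_dsum[OF \<phi>(1)])
  moreover have "tmap E2 (f2 x2) f2 (cls D2 x2 (dpush snd \<phi>)) = cls E2 (f2 x2) (dpush f2 (dpush snd \<phi>))"
    by (rule tmap_cls[where D = D2 and E = E2 and g = f2 and x = x2, OF plots(2)])
      (simp_all add: dpush_snd_in_dsum[OF \<phi>(1)])
  moreover have "dpush fst (dpush (map_prod f1 f2) \<phi>) = dpush f1 (dpush fst \<phi>)"
    and "dpush snd (dpush (map_prod f1 f2) \<phi>) = dpush f2 (dpush snd \<phi>)"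
    unfolding dpush_comp[OF fin] by (simp_all add: comp_def)
  ultimately show ?thesis
    by (simp only: \<phi>(2) prod_cmp_cls \<phi>(1) fst_conv snd_conv)
qed

definition sel :: "(nat \<Rightarrow> bool) \<Rightarrow> (nat \<Rightarrow> nat) \<Rightarrow> vec \<Rightarrow> vec" where
  "sel A \<sigma> y = (\<lambda>j. if A j then y (\<sigma> j) else 0)"

lemma sel_apply: "sel A \<sigma> y j = (if A j then y (\<sigma> j) else 0)"
  by (simp add: sel_def)

lemma sel_in_Rn: "(\<And>j. A j \<Longrightarrow> j < m) \<Longrightarrow> sel A \<sigma> y \<in> Rn m"
  by (force simp: Rn_def sel_apply)

lemma sel_origin: "sel A \<sigma> origin = origin"
  by (simp add: sel_def origin_def)

lemma continuous_on_coordinate: "continuous_on S (\<lambda>x::vec. x k)"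
  by (rule continuous_on_subset[OF continuous_on_product_coordinates]) simp

lemma pdiff_coord: "pdiff i (\<lambda>y. y k) = (\<lambda>x. if i = k then 1 else 0)"
proof
  fix x :: vec
  have "deriv (\<lambda>t. x k + t) 0 = 1" "deriv (\<lambda>t::real. x k) 0 = 0"
    by (rule DERIV_imp_deriv, auto intro!: derivative_eq_intros)+
  moreover have "(\<lambda>t. (x(i := x i + t)) k) = (if i = k then (\<lambda>t. x k + t) else (\<lambda>t. x k))"
    by auto
  ultimately show "pdiff i (\<lambda>y. y k) x = (if i = k then 1 else 0)"
    by (simp add: pdiff_def)
qed

lemma pdiff_const: "pdiff i (\<lambda>y. c) = (\<lambda>x. 0)"
proof
  fix x :: vec
  have "deriv (\<lambda>t::real. c) 0 = 0"
    by (rule DERIV_imp_deriv) (auto intro!: derivative_eq_intros)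
  then show "pdiff i (\<lambda>y. c) x = 0" by (simp add: pdiff_def)
qed

lemma dpart_coord_cases: "dpart ks (\<lambda>y. y k) = (\<lambda>y. y k) \<or> (\<exists>c. dpart ks (\<lambda>y. y k) = (\<lambda>y. c))"
  by (induction ks) (auto simp: pdiff_coord pdiff_const)

lemma smooth_fun_const: "smooth_fun n U (\<lambda>y. c)"
proof -
  have "dpart ks (\<lambda>y. c) = (\<lambda>y. if ks = [] then c else 0)" for ks
    by (induction ks) (auto simp: pdiff_const)
  then show ?thesis by (simp add: smooth_fun_def)
qed

lemma smooth_fun_coord: "smooth_fun n U (\<lambda>y. y k)"
  unfolding smooth_fun_def
proof (intro allI impI conjI ballI)
  fix ks :: "nat list" and x :: vec and i
  have "(\<lambda>t. (x(i := x i + t)) k) = (if i = k then (\<lambda>t. x k + t) else (\<lambda>t. x k))"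
    by auto
  then have "(\<lambda>t. (x(i := x i + t)) k) differentiable (at 0)"
    by simp
  with dpart_coord_cases[of ks k]
  show "continuous_on U (dpart ks (\<lambda>y. y k))"
    and "(\<lambda>t. dpart ks (\<lambda>y. y k) (x(i := x i + t))) differentiable at 0"
    by (auto simp: continuous_on_coordinate)
qed

lemma smooth_map_sel:
  assumes "\<And>j. A j \<Longrightarrow> j < m"
  shows "smooth_map n U m (sel A \<sigma>)"
proof -
  have "smooth_fun n U (\<lambda>x. sel A \<sigma> x j)" for j
    by (cases "A j") (simp_all add: sel_apply smooth_fun_coord smooth_fun_const)
  with assms show ?thesis by (auto simp: smooth_map_def sel_in_Rn)
qed

lemma continuous_on_sel: "continuous_on S (sel A \<sigma>)"
proof (rule continuous_on_coordinatewise_then_product)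
  show "continuous_on S (\<lambda>x. sel A \<sigma> x j)" for j
    by (cases "A j") (simp_all add: sel_apply continuous_on_coordinate)
qed

lemma jac_sel: "jac n m (sel A \<sigma>) v = (\<lambda>j. if j < m \<and> A j \<and> \<sigma> j < n then v (\<sigma> j) else 0)"
proof
  fix j
  have "(\<Sum>i<n. pdiff i (\<lambda>y. y (\<sigma> j)) origin * v i) = (\<Sum>i<n. if i = \<sigma> j then v i else 0)"
    by (intro sum.cong) (auto simp: pdiff_coord)
  then show "jac n m (sel A \<sigma>) v j = (if j < m \<and> A j \<and> \<sigma> j < n then v (\<sigma> j) else 0)"
    by (cases "A j") (simp_all add: jac_def sel_def pdiff_const)
qed

subsection \<open>Splitting a tangent vector of the product\<close>

text \<open>\<open>\<real>\<^sup>2\<^sup>n = \<real>\<^sup>n \<times> \<real>\<^sup>n\<close> in blocks, so that \<open>blk_square n U\<close> is \<open>U \<times> U\<close>; \<open>blk_fst n\<close> is both the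
  projection to and the inclusion of the first block.\<close>

definition blk_fst :: "nat \<Rightarrow> vec \<Rightarrow> vec" where
  "blk_fst n = sel (\<lambda>j. j < n) (\<lambda>j. j)"

definition blk_snd :: "nat \<Rightarrow> vec \<Rightarrow> vec" where
  "blk_snd n = sel (\<lambda>j. j < n) (\<lambda>j. j + n)"

definition blk_inr :: "nat \<Rightarrow> vec \<Rightarrow> vec" where
  "blk_inr n = sel (\<lambda>j. n \<le> j \<and> j < 2 * n) (\<lambda>j. j - n)"

definition blk_diag :: "nat \<Rightarrow> vec \<Rightarrow> vec" where
  "blk_diag n = sel (\<lambda>j. j < 2 * n) (\<lambda>j. if j < n then j else j - n)"

definition blk_square :: "nat \<Rightarrow> vec set \<Rightarrow> vec set" where
  "blk_square n U = {z \<in> Rn (2 * n). blk_fst n z \<in> U \<and> blk_snd n z \<in> U}"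

definition blk_plot :: "nat \<Rightarrow> (vec \<Rightarrow> 'a \<times> 'b) \<Rightarrow> vec \<Rightarrow> 'a \<times> 'b" where
  "blk_plot n p z = (fst (p (blk_fst n z)), snd (p (blk_snd n z)))"

lemmas blk_defs = blk_fst_def blk_snd_def blk_inr_def blk_diag_def

lemma blk_fst_snd_in_Rn: "blk_fst n z \<in> Rn n" "blk_snd n z \<in> Rn n"
  by (simp_all add: blk_defs sel_in_Rn)

lemma blk_smooth_maps:
  "smooth_map m U n (blk_fst n)" "smooth_map m U n (blk_snd n)"
  "smooth_map n U (2 * n) (blk_fst n)" "smooth_map n U (2 * n) (blk_inr n)"
  "smooth_map n U (2 * n) (blk_diag n)"
  by (auto simp: blk_defs intro!: smooth_map_sel)

lemma blk_origin:
  "blk_fst n origin = origin" "blk_snd n origin = origin"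
  "blk_inr n origin = origin" "blk_diag n origin = origin"
  by (simp_all add: blk_defs sel_origin)

lemma blk_embeddings:
  assumes "u \<in> Rn n"
  shows "blk_fst n u \<in> Rn (2 * n)" "blk_fst n (blk_fst n u) = u" "blk_snd n (blk_fst n u) = origin"
    and "blk_inr n u \<in> Rn (2 * n)" "blk_fst n (blk_inr n u) = origin" "blk_snd n (blk_inr n u) = u"
    and "blk_diag n u \<in> Rn (2 * n)" "blk_fst n (blk_diag n u) = u" "blk_snd n (blk_diag n u) = u"
  using assms by (auto simp: blk_defs Rn_def sel_apply fun_eq_iff origin_apply)

lemma jac_blk_diag:
  assumes "v \<in> Rn n"
  shows "jac n (2 * n) (blk_diag n) v j = jac n (2 * n) (blk_fst n) v j + jac n (2 * n) (blk_inr n) v j"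
  using assms by (auto simp: blk_defs jac_sel Rn_def)

lemma open_blk_square:
  assumes "open_Rn n U"
  shows "open_Rn (2 * n) (blk_square n U)"
proof -
  obtain B where B: "open B" "U = Rn n \<inter> B"
    using assms unfolding open_Rn_def openin_open by blast
  have "blk_square n U = Rn (2 * n) \<inter> (blk_fst n -` B \<inter> blk_snd n -` B)"
    using blk_fst_snd_in_Rn by (auto simp: blk_square_def B(2))
  moreover have "open (blk_fst n -` B \<inter> blk_snd n -` B)"
    unfolding blk_fst_def blk_snd_def
    by (intro open_Int open_vimage B(1) continuous_on_sel)
  ultimately show ?thesis
    unfolding open_Rn_def openin_open by blast
qed

lemma connected_blk_square:
  assumes "open_Rn n U" "connected U"
  shows "connected (blk_square n U)"
proof -
  define join :: "vec \<times> vec \<Rightarrow> vec" where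
    "join = (\<lambda>(u, w) j. if j < n then u j else if j < 2 * n then w (j - n) else 0)"
  have join_in: "join (u, w) \<in> blk_square n U" if "u \<in> U" "w \<in> U" for u w
  proof -
    have "u \<in> Rn n" "w \<in> Rn n" using that open_Rn_subset[OF assms(1)] by auto
    then have "join (u, w) \<in> Rn (2 * n)" "blk_fst n (join (u, w)) = u" "blk_snd n (join (u, w)) = w"
      by (auto simp: join_def blk_fst_def blk_snd_def Rn_def sel_apply)
    with that show ?thesis by (simp add: blk_square_def)
  qed
  have join_blk: "z = join (blk_fst n z, blk_snd n z)" if "z \<in> Rn (2 * n)" for z
  proof
    fix j
    show "z j = join (blk_fst n z, blk_snd n z) j"
      using that by (simp add: join_def blk_fst_def blk_snd_def Rn_def sel_apply)
  qed
  have "blk_square n U = join ` (U \<times> U)"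
  proof
    show "join ` (U \<times> U) \<subseteq> blk_square n U"
      using join_in by auto
    show "blk_square n U \<subseteq> join ` (U \<times> U)"
    proof
      fix z assume "z \<in> blk_square n U"
      then have "z \<in> Rn (2 * n)" "(blk_fst n z, blk_snd n z) \<in> U \<times> U"
        by (simp_all add: blk_square_def)
      then show "z \<in> join ` (U \<times> U)" by (intro image_eqI[where f = join, OF join_blk])
    qed
  qed
  moreover have "continuous_on (U \<times> U) join"
  proof (rule continuous_on_coordinatewise_then_product)
    fix j
    have "continuous_on (U \<times> U) (\<lambda>z::vec \<times> vec. fst z k)" "continuous_on (U \<times> U) (\<lambda>z::vec \<times> vec. snd z k)"
      for k by (rule continuous_on_product_then_coordinatewise, intro continuous_intros)+
    then show "continuous_on (U \<times> U) (\<lambda>z. join z j)"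
      by (cases "j < n"; cases "j < 2 * n") (simp_all add: join_def case_prod_beta)
  qed
  ultimately show ?thesis
    using assms(2) by (simp add: connected_continuous_image connected_Times)
qed

lemma blk_square_morphisms:
  assumes "pointed_plot (prod_diffeology D1 D2) (x1, x2) (n, U, p)"
  shows "plot_morphism (n, U, p) (2 * n, blk_square n U, blk_plot n p) (blk_diag n)"
    and "plot_morphism (n, U, (\<lambda>z. (fst z, x2)) \<circ> p) (2 * n, blk_square n U, blk_plot n p) (blk_fst n)"
    and "plot_morphism (n, U, (\<lambda>z. (x1, snd z)) \<circ> p) (2 * n, blk_square n U, blk_plot n p) (blk_inr n)"
proof -
  from assms have U: "open_Rn n U" "origin \<in> U" "p origin = (x1, x2)"
    by (simp_all add: pointed_plot_def prod_plot_iff)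
  have Rn: "u \<in> Rn n" if "u \<in> U" for u
    using open_Rn_subset[OF U(1)] that by blast
  have square: "blk_diag n u \<in> blk_square n U" "blk_fst n u \<in> blk_square n U"
    "blk_inr n u \<in> blk_square n U" if "u \<in> U" for u
    using that U(2) by (simp_all add: blk_square_def blk_embeddings[OF Rn])
  have plot: "blk_plot n p (blk_diag n u) = p u" "blk_plot n p (blk_fst n u) = (fst (p u), x2)"
    "blk_plot n p (blk_inr n u) = (x1, snd (p u))" if "u \<in> U" for u
    using that U(3) by (simp_all add: blk_plot_def blk_embeddings[OF Rn])
  show "plot_morphism (n, U, p) (2 * n, blk_square n U, blk_plot n p) (blk_diag n)"
    and "plot_morphism (n, U, (\<lambda>z. (fst z, x2)) \<circ> p) (2 * n, blk_square n U, blk_plot n p) (blk_fst n)"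
    and "plot_morphism (n, U, (\<lambda>z. (x1, snd z)) \<circ> p) (2 * n, blk_square n U, blk_plot n p) (blk_inr n)"
    unfolding plot_morphism_def prod.case comp_apply
    using blk_smooth_maps(3-5) blk_origin(1,3,4) square plot by blast+
qed

context
  fixes X1 :: "'a set" and D1 :: "nat \<Rightarrow> vec set \<Rightarrow> (vec \<Rightarrow> 'a) \<Rightarrow> bool" and x1 :: 'a
    and X2 :: "'b set" and D2 :: "nat \<Rightarrow> vec set \<Rightarrow> (vec \<Rightarrow> 'b) \<Rightarrow> bool" and x2 :: 'b
  assumes diff1: "diffeology X1 D1" and x1: "x1 \<in> X1"
    and diff2: "diffeology X2 D2" and x2: "x2 \<in> X2"
begin

lemma pointed_plot_fst_Pair:
  "pointed_plot (prod_diffeology D1 D2) (x1, x2) P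
    \<Longrightarrow> pointed_plot (prod_diffeology D1 D2) (x1, x2) (push_obj (\<lambda>z. (fst z, x2)) P)"
  by (rule pointed_plot_push[where D = "prod_diffeology D1 D2" and E = "prod_diffeology D1 D2"
        and g = "\<lambda>z. (fst z, x2)" and x = "(x1, x2)"])
    (use prod_plot_Pair_left[OF diff1 diff2 x2 prod_plot_fst] in \<open>simp_all add: comp_def\<close>)

lemma pointed_plot_Pair_snd:
  "pointed_plot (prod_diffeology D1 D2) (x1, x2) P
    \<Longrightarrow> pointed_plot (prod_diffeology D1 D2) (x1, x2) (push_obj (\<lambda>z. (x1, snd z)) P)"
  by (rule pointed_plot_push[where D = "prod_diffeology D1 D2" and E = "prod_diffeology D1 D2"
        and g = "\<lambda>z. (x1, snd z)" and x = "(x1, x2)"])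
    (use prod_plot_Pair_right[OF diff1 diff2 x1 prod_plot_snd] in \<open>simp_all add: comp_def\<close>)

lemma blk_plot_pointed:
  assumes "pointed_plot (prod_diffeology D1 D2) (x1, x2) (n, U, p)"
  shows "pointed_plot (prod_diffeology D1 D2) (x1, x2) (2 * n, blk_square n U, blk_plot n p)"
proof -
  from assms have p: "open_Rn n U" "D1 n U (fst \<circ> p)" "D2 n U (snd \<circ> p)" "connected U"
      "origin \<in> U" "p origin = (x1, x2)"
    by (auto simp: pointed_plot_def prod_plot_iff)
  have sq: "open_Rn (2 * n) (blk_square n U)" by (rule open_blk_square[OF p(1)])
  have "D1 (2 * n) (blk_square n U) ((fst \<circ> p) \<circ> blk_fst n)"
    by (rule diffeology_comp_plot[of X1 D1 n U "fst \<circ> p", OF diff1 p(2) sq])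
      (auto simp: blk_smooth_maps blk_square_def)
  moreover have "D2 (2 * n) (blk_square n U) ((snd \<circ> p) \<circ> blk_snd n)"
    by (rule diffeology_comp_plot[of X2 D2 n U "snd \<circ> p", OF diff2 p(3) sq])
      (auto simp: blk_smooth_maps blk_square_def)
  moreover have "fst \<circ> blk_plot n p = (fst \<circ> p) \<circ> blk_fst n" "snd \<circ> blk_plot n p = (snd \<circ> p) \<circ> blk_snd n"
    by (auto simp: blk_plot_def)
  ultimately have "prod_diffeology D1 D2 (2 * n) (blk_square n U) (blk_plot n p)"
    using sq by (simp only: prod_plot_iff simp_thms)
  moreover have "origin \<in> blk_square n U" "blk_plot n p origin = (x1, x2)"
    using p(5,6) by (simp_all add: blk_square_def blk_plot_def blk_origin)
  ultimately show ?thesis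
    using connected_blk_square[OF p(1,4)] by (simp add: pointed_plot_def)
qed

lemma rel_split_ins:
  assumes P: "pointed_plot (prod_diffeology D1 D2) (x1, x2) P" and v: "v \<in> Rn (fst P)"
  shows "ssub (ins P v) (sadd (ins (push_obj (\<lambda>z. (fst z, x2)) P) v) (ins (push_obj (\<lambda>z. (x1, snd z)) P) v))
           \<in> rel (prod_diffeology D1 D2) (x1, x2)"
proof -
  obtain n U p where P_eq: "P = (n, U, p)" by (cases P)
  let ?Q = "(2 * n, blk_square n U, blk_plot n p)"
  have Q: "pointed_plot (prod_diffeology D1 D2) (x1, x2) ?Q"
    using P by (simp add: P_eq blk_plot_pointed)
  have P1: "pointed_plot (prod_diffeology D1 D2) (x1, x2) (push_obj (\<lambda>z. (fst z, x2)) P)"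
    and P2: "pointed_plot (prod_diffeology D1 D2) (x1, x2) (push_obj (\<lambda>z. (x1, snd z)) P)"
    using P by (simp_all add: pointed_plot_fst_Pair pointed_plot_Pair_snd)
  note mor = blk_square_morphisms[OF P[unfolded P_eq]]
  let ?P1 = "push_obj (\<lambda>z. (fst z, x2)) P" and ?P2 = "push_obj (\<lambda>z. (x1, snd z)) P"
  let ?J0 = "jac n (2 * n) (blk_diag n) v" and ?J1 = "jac n (2 * n) (blk_fst n) v"
    and ?J2 = "jac n (2 * n) (blk_inr n) v"
  have "ssub (ins P v) (ins ?Q ?J0) \<in> rel (prod_diffeology D1 D2) (x1, x2)"
    using rel_generator[OF P Q _ v] mor(1) by (simp add: P_eq)
  moreover have "ssub (ins ?P1 v) (ins ?Q ?J1) \<in> rel (prod_diffeology D1 D2) (x1, x2)"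
    using rel_generator[OF P1 Q _ ] v mor(2) by (simp add: P_eq push_obj_def)
  moreover have "ssub (ins ?P2 v) (ins ?Q ?J2) \<in> rel (prod_diffeology D1 D2) (x1, x2)"
    using rel_generator[OF P2 Q _ ] v mor(3) by (simp add: P_eq push_obj_def)
  moreover have "ssub (ssub (ssub (ins P v) (ins ?Q ?J0)) (ssub (ins ?P1 v) (ins ?Q ?J1))) (ssub (ins ?P2 v) (ins ?Q ?J2))
      = ssub (ins P v) (sadd (ins ?P1 v) (ins ?P2 v))"
    using v by (intro sfun_eqI) (simp add: sfun_simps ins_apply jac_blk_diag P_eq)
  ultimately show ?thesis by (metis rel_ssub)
qed

lemma rel_split:
  assumes "\<phi> \<in> dsum (prod_diffeology D1 D2) (x1, x2)"
  shows "ssub \<phi> (sadd (dpush (\<lambda>z. (fst z, x2)) \<phi>) (dpush (\<lambda>z. (x1, snd z)) \<phi>))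
           \<in> rel (prod_diffeology D1 D2) (x1, x2)"
  using assms
proof (induction rule: dsum_induct)
  case zero
  have zero: "ssub (\<lambda>_. origin) (sadd (\<lambda>_. origin) (\<lambda>_. origin)) = (\<lambda>_. origin)"
    by (rule sfun_eqI) (simp add: sfun_simps)
  show ?case unfolding dpush_zero zero by (rule rel.rel_zero)
next
  case (ins \<psi> P v)
  have "finsupp \<psi>" using ins.hyps(1) by (rule dsum_finsupp)
  then have "ssub (sadd (ins P v) \<psi>) (sadd (dpush (\<lambda>z. (fst z, x2)) (sadd (ins P v) \<psi>))
                (dpush (\<lambda>z. (x1, snd z)) (sadd (ins P v) \<psi>)))
     = sadd (ssub (ins P v) (sadd (ins (push_obj (\<lambda>z. (fst z, x2)) P) v) (ins (push_obj (\<lambda>z. (x1, snd z)) P) v)))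
            (ssub \<psi> (sadd (dpush (\<lambda>z. (fst z, x2)) \<psi>) (dpush (\<lambda>z. (x1, snd z)) \<psi>)))"
    by (intro sfun_eqI) (simp add: sfun_simps dpush_sadd finsupp_ins dpush_ins)
  then show ?case
    using rel_sadd[OF rel_split_ins[OF ins.hyps(2,3)] ins.IH] by simp
qed

lemma dpush_Pair_left_in_dsum:
  "\<phi> \<in> dsum D1 x1 \<Longrightarrow> dpush (\<lambda>a. (a, x2)) \<phi> \<in> dsum (prod_diffeology D1 D2) (x1, x2)"
  by (rule dpush_in_dsum[where E = "prod_diffeology D1 D2" and g = "\<lambda>a. (a, x2)"
        and x = x1, OF prod_plot_Pair_left[OF diff1 diff2 x2]]) simp_all

lemma dpush_Pair_right_in_dsum:
  "\<phi> \<in> dsum D2 x2 \<Longrightarrow> dpush (\<lambda>b. (x1, b)) \<phi> \<in> dsum (prod_diffeology D1 D2) (x1, x2)"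
  by (rule dpush_in_dsum[where E = "prod_diffeology D1 D2" and g = "\<lambda>b. (x1, b)"
        and x = x2, OF prod_plot_Pair_right[OF diff1 diff2 x1]]) simp_all

lemma dpush_Pair_left_in_rel:
  "r \<in> rel D1 x1 \<Longrightarrow> dpush (\<lambda>a. (a, x2)) r \<in> rel (prod_diffeology D1 D2) (x1, x2)"
  by (rule dpush_in_rel[where E = "prod_diffeology D1 D2" and g = "\<lambda>a. (a, x2)"
        and x = x1, OF prod_plot_Pair_left[OF diff1 diff2 x2]]) simp_all

lemma dpush_Pair_right_in_rel:
  "r \<in> rel D2 x2 \<Longrightarrow> dpush (\<lambda>b. (x1, b)) r \<in> rel (prod_diffeology D1 D2) (x1, x2)"
  by (rule dpush_in_rel[where E = "prod_diffeology D1 D2" and g = "\<lambda>b. (x1, b)"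
        and x = x2, OF prod_plot_Pair_right[OF diff1 diff2 x1]]) simp_all

lemma prod_cmp_inj_on: "inj_on (prod_cmp D1 x1 D2 x2) (tspace (prod_diffeology D1 D2) (x1, x2))"
proof (rule inj_onI)
  fix C C' assume C: "C \<in> tspace (prod_diffeology D1 D2) (x1, x2)"
    and C': "C' \<in> tspace (prod_diffeology D1 D2) (x1, x2)"
    and eq: "prod_cmp D1 x1 D2 x2 C = prod_cmp D1 x1 D2 x2 C'"
  obtain \<phi> where \<phi>: "\<phi> \<in> dsum (prod_diffeology D1 D2) (x1, x2)" "C = cls (prod_diffeology D1 D2) (x1, x2) \<phi>"
    using C by (rule tspaceE)
  obtain \<phi>' where \<phi>': "\<phi>' \<in> dsum (prod_diffeology D1 D2) (x1, x2)" "C' = cls (prod_diffeology D1 D2) (x1, x2) \<phi>'"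
    using C' by (rule tspaceE)
  define \<delta> where "\<delta> = ssub \<phi> \<phi>'"
  have \<delta>: "\<delta> \<in> dsum (prod_diffeology D1 D2) (x1, x2)"
    using \<phi> \<phi>' by (simp add: \<delta>_def ssub_in_dsum)
  then have fin: "finsupp \<delta>" by (rule dsum_finsupp)
  have "dpush fst \<delta> \<in> rel D1 x1" "dpush snd \<delta> \<in> rel D2 x2"
    using eq \<phi> \<phi>' dpush_fst_in_dsum[OF \<phi>(1)] dpush_fst_in_dsum[OF \<phi>'(1)]
      dpush_snd_in_dsum[OF \<phi>(1)] dpush_snd_in_dsum[OF \<phi>'(1)]
    by (simp_all add: prod_cmp_cls cls_eq_iff \<delta>_def dpush_ssub dsum_finsupp)
  then have "dpush (\<lambda>a. (a, x2)) (dpush fst \<delta>) \<in> rel (prod_diffeology D1 D2) (x1, x2)"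
    and "dpush (\<lambda>b. (x1, b)) (dpush snd \<delta>) \<in> rel (prod_diffeology D1 D2) (x1, x2)"
    by (simp_all add: dpush_Pair_left_in_rel dpush_Pair_right_in_rel)
  then have "sadd (dpush (\<lambda>z. (fst z, x2)) \<delta>) (dpush (\<lambda>z. (x1, snd z)) \<delta>)
      \<in> rel (prod_diffeology D1 D2) (x1, x2)"
    by (simp add: dpush_comp[OF fin] comp_def rel_sadd)
  from rel_sadd[OF rel_split[OF \<delta>] this]
  have "ssub \<phi> \<phi>' \<in> rel (prod_diffeology D1 D2) (x1, x2)"
    by (simp add: ssub_def sadd_def sscale_def \<delta>_def)
  then show "C = C'"
    using \<phi> \<phi>' by (simp add: cls_eq_iff)
qed

lemma prod_cmp_cls_inclusions:
  assumes \<phi>1: "\<phi>1 \<in> dsum D1 x1" and \<phi>2: "\<phi>2 \<in> dsum D2 x2"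
  defines "\<phi> \<equiv> sadd (dpush (\<lambda>a. (a, x2)) \<phi>1) (dpush (\<lambda>b. (x1, b)) \<phi>2)"
  shows "\<phi> \<in> dsum (prod_diffeology D1 D2) (x1, x2)"
    and "prod_cmp D1 x1 D2 x2 (cls (prod_diffeology D1 D2) (x1, x2) \<phi>) = (cls D1 x1 \<phi>1, cls D2 x2 \<phi>2)"
proof -
  show \<phi>: "\<phi> \<in> dsum (prod_diffeology D1 D2) (x1, x2)"
    unfolding \<phi>_def using assms by (intro sadd_in_dsum dpush_Pair_left_in_dsum dpush_Pair_right_in_dsum)
  have fin: "finsupp \<phi>1" "finsupp \<phi>2" using \<phi>1 \<phi>2 by (simp_all add: dsum_finsupp)
  have comps: "fst \<circ> (\<lambda>a. (a, x2)) = (\<lambda>a. a)" "fst \<circ> (\<lambda>b. (x1, b)) = (\<lambda>_. x1)"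
    "snd \<circ> (\<lambda>a. (a, x2)) = (\<lambda>_. x2)" "snd \<circ> (\<lambda>b. (x1, b)) = (\<lambda>a. a)"
    by auto
  have "dpush fst \<phi> = sadd \<phi>1 (dpush (\<lambda>_. x1) \<phi>2)" "dpush snd \<phi> = sadd (dpush (\<lambda>_. x2) \<phi>1) \<phi>2"
    unfolding \<phi>_def dpush_sadd[OF finsupp_dpush finsupp_dpush, OF fin] dpush_comp[OF fin(1)]
      dpush_comp[OF fin(2)] comps dpush_id[OF fin(1)] dpush_id[OF fin(2)] by simp_all
  moreover have "dpush (\<lambda>_. x1) \<phi>2 \<in> rel D1 x1" "dpush (\<lambda>_. x2) \<phi>1 \<in> rel D2 x2"
    using dpush_const_in_rel[OF diff2 diff1 x1 \<phi>2] dpush_const_in_rel[OF diff1 diff2 x2 \<phi>1] .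
  moreover have "ssub (sadd \<phi>1 \<psi>1) \<phi>1 = \<psi>1" "ssub (sadd \<psi>2 \<phi>2) \<phi>2 = \<psi>2" for \<psi>1 \<psi>2
    by (rule sfun_eqI, simp add: sfun_simps)+
  ultimately show "prod_cmp D1 x1 D2 x2 (cls (prod_diffeology D1 D2) (x1, x2) \<phi>) = (cls D1 x1 \<phi>1, cls D2 x2 \<phi>2)"
    using \<phi> \<phi>1 \<phi>2 dpush_fst_in_dsum[OF \<phi>] dpush_snd_in_dsum[OF \<phi>]
    by (simp add: prod_cmp_cls cls_eq_iff)
qed

lemma prod_cmp_image:
  "prod_cmp D1 x1 D2 x2 ` tspace (prod_diffeology D1 D2) (x1, x2) = tspace D1 x1 \<times> tspace D2 x2"
proof
  show "prod_cmp D1 x1 D2 x2 ` tspace (prod_diffeology D1 D2) (x1, x2) \<subseteq> tspace D1 x1 \<times> tspace D2 x2"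
  proof
    fix C' assume "C' \<in> prod_cmp D1 x1 D2 x2 ` tspace (prod_diffeology D1 D2) (x1, x2)"
    then obtain \<phi> where "\<phi> \<in> dsum (prod_diffeology D1 D2) (x1, x2)"
      "C' = prod_cmp D1 x1 D2 x2 (cls (prod_diffeology D1 D2) (x1, x2) \<phi>)"
      by (auto elim: tspaceE)
    with dpush_fst_in_dsum[OF this(1)] dpush_snd_in_dsum[OF this(1)]
    show "C' \<in> tspace D1 x1 \<times> tspace D2 x2" by (simp add: prod_cmp_cls tspace_def)
  qed
  show "tspace D1 x1 \<times> tspace D2 x2 \<subseteq> prod_cmp D1 x1 D2 x2 ` tspace (prod_diffeology D1 D2) (x1, x2)"
  proof
    fix C assume "C \<in> tspace D1 x1 \<times> tspace D2 x2"
    then obtain \<phi>1 \<phi>2 where "\<phi>1 \<in> dsum D1 x1" "\<phi>2 \<in> dsum D2 x2" "C = (cls D1 x1 \<phi>1, cls D2 x2 \<phi>2)"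
      by (auto simp: tspace_def)
    from prod_cmp_cls_inclusions[OF this(1,2)] this(3)
    show "C \<in> prod_cmp D1 x1 D2 x2 ` tspace (prod_diffeology D1 D2) (x1, x2)"
      unfolding tspace_def by (metis image_eqI)
  qed
qed

end

theorem proposition3p7:
  fixes X1 :: "'a set" and D1 :: "nat \<Rightarrow> vec set \<Rightarrow> (vec \<Rightarrow> 'a) \<Rightarrow> bool" and x1 :: 'a
    and X2 :: "'b set" and D2 :: "nat \<Rightarrow> vec set \<Rightarrow> (vec \<Rightarrow> 'b) \<Rightarrow> bool" and x2 :: 'b
  assumes "diffeology X1 D1" and "x1 \<in> X1"
    and "diffeology X2 D2" and "x2 \<in> X2"
  shows
    \<comment> \<open>the canonical map is a bijection ...\<close>
    "bij_betw (prod_cmp D1 x1 D2 x2) (tspace (prod_diffeology D1 D2) (x1, x2))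
        (tspace D1 x1 \<times> tspace D2 x2)
    \<comment> \<open>... which is linear ...\<close>
   \<and> (\<forall>C\<in>tspace (prod_diffeology D1 D2) (x1, x2). \<forall>C'\<in>tspace (prod_diffeology D1 D2) (x1, x2).
        prod_cmp D1 x1 D2 x2 (tadd (prod_diffeology D1 D2) (x1, x2) C C')
        = (tadd D1 x1 (fst (prod_cmp D1 x1 D2 x2 C)) (fst (prod_cmp D1 x1 D2 x2 C')),
           tadd D2 x2 (snd (prod_cmp D1 x1 D2 x2 C)) (snd (prod_cmp D1 x1 D2 x2 C'))))
   \<and> (\<forall>c. \<forall>C\<in>tspace (prod_diffeology D1 D2) (x1, x2).
        prod_cmp D1 x1 D2 x2 (tscale (prod_diffeology D1 D2) (x1, x2) c C)
        = (tscale D1 x1 c (fst (prod_cmp D1 x1 D2 x2 C)),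
           tscale D2 x2 c (snd (prod_cmp D1 x1 D2 x2 C))))
    \<comment> \<open>... and natural in smooth pointed maps f1 : (X1,x1) -> (Y1,y1), f2 : (X2,x2) -> (Y2,y2)\<close>
   \<and> (\<forall>(Y1 :: 'c set) E1 y1 (f1 :: 'a \<Rightarrow> 'c) (Y2 :: 'd set) E2 y2 (f2 :: 'b \<Rightarrow> 'd).
        diffeology Y1 E1 \<and> diffeology Y2 E2 \<and> dsmooth X1 D1 Y1 E1 f1 \<and> dsmooth X2 D2 Y2 E2 f2
        \<and> f1 x1 = y1 \<and> f2 x2 = y2 \<longrightarrow>
        (\<forall>C\<in>tspace (prod_diffeology D1 D2) (x1, x2).
           prod_cmp E1 y1 E2 y2 (tmap (prod_diffeology E1 E2) (y1, y2) (map_prod f1 f2) C)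
           = (tmap E1 y1 f1 (fst (prod_cmp D1 x1 D2 x2 C)),
              tmap E2 y2 f2 (snd (prod_cmp D1 x1 D2 x2 C)))))"
  using prod_cmp_inj_on[OF assms] prod_cmp_image[OF assms]
    prod_cmp_tadd prod_cmp_tscale prod_cmp_natural
  by (auto simp: bij_betw_def)

end
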